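(* Let $n\ge2$. <ul> <li>If $n\equiv1,2,3\pmod 4$, then $\Gamma^k\subseteq\mathrm{Q}$ for all $k=1,2,\dots,n-1$.</li> <li>If $n\equiv0\pmod4$, then $\Gamma^k\subseteq\mathrm{Q}$ for all odd $k$ with $1\le k\le n-1$, and $\Gamma^k\subseteq\mathrm{Q}'$ for all even $k$ with $2\le k\le n-2$.</li> </ul> In particular, $\Gamma^k\subseteq\mathrm{P}$ for $1\le k\le n-1$.
   Context: Let $\mathrm{C}$ be either the real Clifford algebra $C\ell_{p,q}$ with $p+q=n$, or the complex Clifford algebra $C\ell(\mathbb{C}^n)$. It has identity $e$ and generators $e_1,\dots,e_n$ satisfying $e_ae_b+e_be_a=2\eta_{ab}e$. In the real case $\eta=\mathrm{diag}(1,\dots,1,-1,\dots,-1)$ with $p$ entries $+1$ and $q$ entries $-1$. In the complex case $\eta=I_n$. $\mathrm{C}^k$ is the grade-$k$ subspace, spanned by the products $e_{a_1}\cdots e_{a_k}$ with $a_1<\dots<a_k$. The even subspace is $\mathrm{C}^{(0)}=\bigoplus_{k\text{ even}}\mathrm{C}^k$ and the odd subspace is $\mathrm{C}^{(1)}=\bigoplus_{k\text{ odd}}\mathrm{C}^k$. The reversion $U\mapsto\tilde U$ is the linear anti-automorphism acting on $\mathrm{C}^k$ as $(-1)^{k(k-1)/2}$. For $S\subseteq\mathrm{C}$, $S^\times$ is the set of elements of $S$ invertible in $\mathrm{C}$, and $\mathrm{C}^{\times(j)}:=(\mathrm{C}^{(j)})^\times$. $\mathrm{Z}$ is the center: $\mathrm{Z}=\mathrm{C}^0$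 for $n$ even and $\mathrm{Z}=\mathrm{C}^0\oplus\mathrm{C}^n$ for $n$ odd. Define: <ul> <li>$\Gamma^k=\{T\in\mathrm{C}^\times: T\,\mathrm{C}^k\,T^{-1}\subseteq\mathrm{C}^k\}$;</li> <li>$\mathrm{P}:=\mathrm{Z}^\times(\mathrm{C}^{\times(0)}\cup\mathrm{C}^{\times(1)})=\{WT: W\in\mathrm{Z}^\times, T\in\mathrm{C}^{\times(0)}\cup\mathrm{C}^{\times(1)}\}$;</li> <li>$\mathrm{Q}:=\{T\in\mathrm{P}:\tilde TT\in\mathrm{Z}^\times\}$;</li> <li>$\mathrm{Q}':=\{T\in\mathrm{P}:\tilde TT\in(\mathrm{C}^0\oplus\mathrm{C}^n)^\times\}$.</li> </ul> *)

theory Defs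
  imports Complex_Main
begin

text \<open>Concrete model of the Clifford algebra with generators e_0,...,e_(n-1)
(indices shifted to start at 0) and diagonal metric eta i = e_i e_i.
An element is a coefficient function on index sets (blades); elements of the
algebra are those whose coefficients vanish outside subsets of {..<n}.
The basis blade for A = {a_1 < ... < a_k} is e_(a_1) ... e_(a_k).\<close>

type_synonym 'a cl = "nat set \<Rightarrow> 'a"

definition cl_carrier :: "nat \<Rightarrow> 'a::field cl set" where
  "cl_carrier n = {x. \<forall>A. \<not> A \<subseteq> {..<n} \<longrightarrow> x A = 0}"

text \<open>e_A e_B = bsign eta A B * e_(A symdiff B)\<close>
definition bsign :: "(nat \<Rightarrow> 'a::field) \<Rightarrow> nat set \<Rightarrow> nat set \<Rightarrow> 'a" where
  "bsign eta A B = (-1) ^ card {(a, b). a \<in> A \<and> b \<in> B \<and> b < a} * (\<Prod>i\<in>A \<inter> B. eta i)"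

definition cl_mul :: "nat \<Rightarrow> (nat \<Rightarrow> 'a::field) \<Rightarrow> 'a cl \<Rightarrow> 'a cl \<Rightarrow> 'a cl" where
  "cl_mul n eta x y = (\<lambda>C. \<Sum>A\<in>Pow {..<n}. \<Sum>B\<in>Pow {..<n}.
      if (A - B) \<union> (B - A) = C then x A * y B * bsign eta A B else 0)"

definition cl_one :: "'a::field cl" where
  "cl_one = (\<lambda>A. if A = {} then 1 else 0)"

definition cl_units :: "nat \<Rightarrow> (nat \<Rightarrow> 'a::field) \<Rightarrow> 'a cl set" where
  "cl_units n eta = {x \<in> cl_carrier n. \<exists>y \<in> cl_carrier n.
      cl_mul n eta x y = cl_one \<and> cl_mul n eta y x = cl_one}"

definition cl_inv :: "nat \<Rightarrow> (nat \<Rightarrow> 'a::field) \<Rightarrow> 'a cl \<Rightarrow> 'a cl" where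
  "cl_inv n eta x = (THE y. y \<in> cl_carrier n \<and> cl_mul n eta x y = cl_one \<and> cl_mul n eta y x = cl_one)"

definition cl_grade :: "nat \<Rightarrow> nat \<Rightarrow> 'a::field cl set" where
  "cl_grade n k = {x \<in> cl_carrier n. \<forall>A. card A \<noteq> k \<longrightarrow> x A = 0}"

definition cl_parity :: "nat \<Rightarrow> nat \<Rightarrow> 'a::field cl set" where
  "cl_parity n j = {x \<in> cl_carrier n. \<forall>A. card A mod 2 \<noteq> j \<longrightarrow> x A = 0}"

definition cl_scalar_pseudo :: "nat \<Rightarrow> 'a::field cl set" where
  "cl_scalar_pseudo n = {x \<in> cl_carrier n. \<forall>A. card A \<noteq> 0 \<and> card A \<noteq> n \<longrightarrow> x A = 0}"

definition cl_rev :: "'a::field cl \<Rightarrow> 'a cl" where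
  "cl_rev x = (\<lambda>A. (-1) ^ (card A * (card A - 1) div 2) * x A)"

definition cl_center :: "nat \<Rightarrow> (nat \<Rightarrow> 'a::field) \<Rightarrow> 'a cl set" where
  "cl_center n eta = {z \<in> cl_carrier n. \<forall>x \<in> cl_carrier n. cl_mul n eta z x = cl_mul n eta x z}"

definition cl_invertibles :: "nat \<Rightarrow> (nat \<Rightarrow> 'a::field) \<Rightarrow> 'a cl set \<Rightarrow> 'a cl set" where
  "cl_invertibles n eta S = S \<inter> cl_units n eta"

definition cl_Gamma :: "nat \<Rightarrow> (nat \<Rightarrow> 'a::field) \<Rightarrow> nat \<Rightarrow> 'a cl set" where
  "cl_Gamma n eta k = {T \<in> cl_units n eta. \<forall>U \<in> cl_grade n k.
      cl_mul n eta (cl_mul n eta T U) (cl_inv n eta T) \<in> cl_grade n k}"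

definition cl_P :: "nat \<Rightarrow> (nat \<Rightarrow> 'a::field) \<Rightarrow> 'a cl set" where
  "cl_P n eta = {cl_mul n eta W T | W T. W \<in> cl_invertibles n eta (cl_center n eta) \<and>
      T \<in> cl_invertibles n eta (cl_parity n 0) \<union> cl_invertibles n eta (cl_parity n 1)}"

definition cl_Q :: "nat \<Rightarrow> (nat \<Rightarrow> 'a::field) \<Rightarrow> 'a cl set" where
  "cl_Q n eta = {T \<in> cl_P n eta. cl_mul n eta (cl_rev T) T \<in> cl_invertibles n eta (cl_center n eta)}"

definition cl_Q' :: "nat \<Rightarrow> (nat \<Rightarrow> 'a::field) \<Rightarrow> 'a cl set" where
  "cl_Q' n eta = {T \<in> cl_P n eta. cl_mul n eta (cl_rev T) T \<in> cl_invertibles n eta (cl_scalar_pseudo n)}"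

definition eta_pq :: "nat \<Rightarrow> nat \<Rightarrow> real" where
  "eta_pq p i = (if i < p then 1 else -1)"

end

theory Submission
  imports Defs
begin

text \<open>For T in Gamma^k the conjugate T U T^-1 of a k-vector U is again a k-vector, hence is fixed
  by the grade involution and by reversion up to the same signs as U. It follows that both
  X = T^-1 hat T and Y = rev T T commute with all of C^k. For 1 <= k < n every blade other than
  1 and e_N anticommutes with some k-blade, so X and Y lie in C^0 + C^n.

  From hat T = T X and X hat X = 1: for even n this forces X = +-1, so T is even or odd; for odd
  n, X is central and T (1 +- X) = T +- hat T is even or odd, with 1 +- X a central unit for the
  right sign. So T is in P, and Y is an invertible element of C^0 + C^n, i.e. T is in Q'. Y is
  central when n is odd, and has no e_N-component when n is even and either k is odd or
  n = 2 (mod 4); then T is in Q.\<close>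

section \<open>Signs of products of blades\<close>

text \<open>A constant rather than the abbreviation Set.sym_diff, so that the simplifier keeps it
  folded.\<close>
definition symdiff :: "'a set \<Rightarrow> 'a set \<Rightarrow> 'a set" where
  "symdiff A B = (A - B) \<union> (B - A)"

lemma symdiff_eq_iff: "symdiff A B = C \<longleftrightarrow> B = symdiff A C"
  unfolding symdiff_def by blast

lemma symdiff_symdiff_right [simp]: "symdiff A (symdiff A B) = B"
  unfolding symdiff_def by blast

lemma symdiff_symdiff_left [simp]: "symdiff (symdiff A B) B = A"
  unfolding symdiff_def by blast

lemma symdiff_empty [simp]: "symdiff {} B = B" "symdiff B {} = B" "symdiff B B = {}"
  unfolding symdiff_def by blast+

lemma symdiff_commute: "symdiff A B = symdiff B A"
  unfolding symdiff_def by blast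

lemma symdiff_subset: "A \<subseteq> N \<Longrightarrow> B \<subseteq> N \<Longrightarrow> symdiff A B \<subseteq> N"
  unfolding symdiff_def by blast

lemma finite_symdiff: "finite A \<Longrightarrow> finite B \<Longrightarrow> finite (symdiff A B)"
  unfolding symdiff_def by blast

lemma finite_subset_lessThan: "A \<subseteq> {..<n::nat} \<Longrightarrow> finite A"
  using finite_subset by blast

lemma card_additive_symdiff:
  fixes p :: "'a set \<Rightarrow> 'b set"
  assumes fin: "\<And>X. finite X \<Longrightarrow> finite (p X)"
    and union: "\<And>X Y. p (X \<union> Y) = p X \<union> p Y"
    and disjoint: "\<And>X Y. X \<inter> Y = {} \<Longrightarrow> p X \<inter> p Y = {}"
    and "finite A" "finite B"
  shows "card (p (symdiff A B)) + 2 * card (p (A \<inter> B)) = card (p A) + card (p B)"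
proof -
  have card_union: "card (p (X \<union> Y)) = card (p X) + card (p Y)"
    if "X \<inter> Y = {}" "finite X" "finite Y" for X Y
    unfolding union by (rule card_Un_disjoint) (use that fin disjoint in auto)
  have "card (p (symdiff A B)) = card (p (A - B)) + card (p (B - A))"
    unfolding symdiff_def by (rule card_union) (use assms in auto)
  moreover have "card (p A) = card (p (A - B)) + card (p (A \<inter> B))"
    using card_union[of "A - B" "A \<inter> B"] assms by (auto simp: Un_Diff_Int)
  moreover have "card (p B) = card (p (B - A)) + card (p (A \<inter> B))"
    using card_union[of "B - A" "B \<inter> A", unfolded Un_Diff_Int, unfolded Int_commute[of B A]] assms
    by auto
  ultimately show ?thesis by simp
qed

definition inversions :: "nat set \<Rightarrow> nat set \<Rightarrow> nat" where
  "inversions A B = card {(a, b). a \<in> A \<and> b \<in> B \<and> b < a}"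

lemma bsign_eq_inversions: "bsign eta A B = (-1) ^ inversions A B * (\<Prod>i\<in>A \<inter> B. eta i)"
  unfolding bsign_def inversions_def ..

lemma inversions_symdiff_left:
  assumes "finite A" "finite B" "finite Z"
  shows "inversions (symdiff A B) Z + 2 * inversions (A \<inter> B) Z = inversions A Z + inversions B Z"
  unfolding inversions_def
  by (rule card_additive_symdiff[where p="\<lambda>X. {(a, b). a \<in> X \<and> b \<in> Z \<and> b < a}"])
     (auto intro: finite_subset[of _ "_ \<times> Z"] simp: assms)

lemma inversions_symdiff_right:
  assumes "finite A" "finite B" "finite Z"
  shows "inversions Z (symdiff A B) + 2 * inversions Z (A \<inter> B) = inversions Z A + inversions Z B"
  unfolding inversions_def
  by (rule card_additive_symdiff[where p="\<lambda>X. {(a, b). a \<in> Z \<and> b \<in> X \<and> b < a}"])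
     (auto intro: finite_subset[of _ "Z \<times> _"] simp: assms)

lemma minus_one_power_add_double: "(-1::'a::comm_ring_1) ^ (m + 2 * k) = (-1) ^ m"
  by (simp add: power_add power_mult)

lemma minus_one_power_eq_if_even: "even (x + y) \<Longrightarrow> (-1::'a::comm_ring_1) ^ x = (-1) ^ y"
  by (simp add: minus_one_power_iff)

lemma bsign_cocycle:
  assumes "finite X" "finite Y" "finite Z"
  shows "bsign eta X Y * bsign eta (symdiff X Y) Z = bsign eta Y Z * bsign eta X (symdiff Y Z)"
proof -
  have sign_left: "(-1::'a) ^ inversions (symdiff X Y) Z = (-1) ^ inversions X Z * (-1) ^ inversions Y Z"
    by (metis inversions_symdiff_left[OF assms] minus_one_power_add_double power_add)
  have sign_right: "(-1::'a) ^ inversions X (symdiff Y Z) = (-1) ^ inversions X Y * (-1) ^ inversions X Z"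
    by (metis inversions_symdiff_right[OF assms(2,3,1)] minus_one_power_add_double power_add)
  have "(\<Prod>i\<in>X \<inter> Y. eta i) * (\<Prod>i\<in>symdiff X Y \<inter> Z. eta i) = (\<Prod>i\<in>(X \<inter> Y) \<union> (symdiff X Y \<inter> Z). eta i)"
    by (rule prod.union_disjoint[symmetric]) (use assms in \<open>auto simp: symdiff_def\<close>)
  also have "(X \<inter> Y) \<union> (symdiff X Y \<inter> Z) = (Y \<inter> Z) \<union> (X \<inter> symdiff Y Z)"
    unfolding symdiff_def by blast
  also have "(\<Prod>i\<in>\<dots>. eta i) = (\<Prod>i\<in>Y \<inter> Z. eta i) * (\<Prod>i\<in>X \<inter> symdiff Y Z. eta i)"
    by (rule prod.union_disjoint) (use assms in \<open>auto simp: symdiff_def\<close>)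
  finally show ?thesis
    unfolding bsign_eq_inversions sign_left sign_right by (simp add: mult_ac)
qed

lemma card_symdiff: "finite A \<Longrightarrow> finite B \<Longrightarrow> card (symdiff A B) + 2 * card (A \<inter> B) = card A + card B"
  using card_additive_symdiff[where p="\<lambda>X. X"] by auto

lemma minus_one_power_card_symdiff:
  assumes "finite A" "finite C"
  shows "(-1::'b::comm_ring_1) ^ card C = (-1) ^ card A * (-1) ^ card (symdiff A C)"
proof -
  have "card (symdiff A C) + 2 * card (A \<inter> C) = card A + card C"
    using card_symdiff[OF assms] .
  then have "(-1::'b) ^ card C = (-1) ^ (card A + card (symdiff A C))"
    by (intro minus_one_power_eq_if_even) presburger
  then show ?thesis by (simp add: power_add)
qed

lemma inversions_swap:
  assumes "finite A" "finite B"
  shows "inversions A B + inversions B A + card (A \<inter> B) = card A * card B"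
proof -
  let ?gt = "{(a, b). a \<in> A \<and> b \<in> B \<and> b < a}"
  let ?lt = "{(a, b). a \<in> A \<and> b \<in> B \<and> a < b}"
  let ?diag = "(\<lambda>a. (a, a)) ` (A \<inter> B)"
  have fin: "finite (A \<times> B)" using assms by simp
  have split: "A \<times> B = ?gt \<union> ?lt \<union> ?diag" by (auto simp: linorder_neq_iff)
  have "inversions B A = card ((\<lambda>(b, a). (a, b)) ` {(b, a). b \<in> B \<and> a \<in> A \<and> a < b})"
    unfolding inversions_def by (rule card_image[symmetric]) (auto simp: inj_on_def)
  also have "(\<lambda>(b, a). (a, b)) ` {(b, a). b \<in> B \<and> a \<in> A \<and> a < b} = ?lt" by auto
  finally have lt: "inversions B A = card ?lt" .
  have diag: "card ?diag = card (A \<inter> B)" by (rule card_image) (auto simp: inj_on_def)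
  have "card (A \<times> B) = card ?gt + card ?lt + card ?diag"
    unfolding split
    by (subst card_Un_disjoint; (subst card_Un_disjoint)?) (use fin split in \<open>auto intro: finite_subset\<close>)
  then show ?thesis using lt diag unfolding inversions_def by (simp add: card_cartesian_product)
qed

lemma bsign_swap:
  assumes "finite A" "finite B"
  shows "bsign eta B A = (-1::'a::field) ^ (card A * card B + card (A \<inter> B)) * bsign eta A B"
proof -
  have "inversions B A + (card A * card B + card (A \<inter> B) + inversions A B)
      = 2 * (inversions A B + inversions B A + card (A \<inter> B))"
    unfolding inversions_swap[OF assms, symmetric] by simp
  then have "(-1::'a) ^ inversions B A = (-1) ^ (card A * card B + card (A \<inter> B) + inversions A B)"
    by (intro minus_one_power_eq_if_even) (metis dvd_triv_left)
  then show ?thesis unfolding bsign_eq_inversions by (simp add: power_add Int_commute mult_ac)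
qed

lemma choose_two_add: "(a + b) choose 2 = (a choose 2) + (b choose 2) + a * b"
  by (induction b) (simp_all add: numeral_2_eq_2)

lemma choose_two_double: "((2 * c) choose 2) + c = 2 * (c * c)"
  by (simp add: choose_two algebra_simps) (cases c; simp add: algebra_simps)

lemma choose_two_odd: "n mod 4 = 2 \<Longrightarrow> odd (n choose 2)"
proof -
  assume "n mod 4 = 2"
  then obtain m where "n = 4 * m + 2" by (metis div_mult_mod_eq mult.commute)
  then have "n choose 2 = (2 * m + 1) * (4 * m + 1)"
    by (simp add: choose_two algebra_simps)
  then show ?thesis by simp
qed

text \<open>The identity rev (e_A e_B) = rev e_B rev e_A on the level of signs.\<close>
lemma bsign_reverse:
  assumes "finite A" "finite B"
  shows "(-1::'a::field) ^ (card (symdiff A B) choose 2) * bsign eta A B =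
     (-1) ^ (card A choose 2) * (-1) ^ (card B choose 2) * bsign eta B A"
proof -
  let ?m = "card (symdiff A B)" and ?c = "card (A \<inter> B)"
  have "?m + 2 * ?c = card A + card B" using card_symdiff[OF assms] .
  then have "(?m + 2 * ?c) choose 2 = (card A + card B) choose 2" by simp
  then have "(?m choose 2) + ((2 * ?c) choose 2) + ?m * (2 * ?c)
      = (card A choose 2) + (card B choose 2) + card A * card B"
    by (simp only: choose_two_add)
  then have "((?m choose 2) + inversions A B) + ((card A choose 2) + (card B choose 2) + inversions B A)
      = 2 * ((?m choose 2) + ?c * ?c + ?m * ?c - ?c)"
    using inversions_swap[OF assms] choose_two_double[of ?c] by (simp add: algebra_simps)
  then have "(-1::'a) ^ ((?m choose 2) + inversions A B) = (-1) ^ ((card A choose 2) + (card B choose 2) + inversions B A)"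
    by (intro minus_one_power_eq_if_even) (metis dvd_triv_left)
  then show ?thesis unfolding bsign_eq_inversions by (simp add: power_add Int_commute mult_ac)
qed

section \<open>The Clifford product\<close>

definition cl_scale :: "'a::field \<Rightarrow> 'a cl \<Rightarrow> 'a cl" where
  "cl_scale c x = (\<lambda>A. c * x A)"

definition cl_add :: "'a::field cl \<Rightarrow> 'a cl \<Rightarrow> 'a cl" where
  "cl_add x y = (\<lambda>A. x A + y A)"

definition cl_hat :: "'a::field cl \<Rightarrow> 'a cl" where
  "cl_hat x = (\<lambda>A. (-1) ^ card A * x A)"

definition cl_blade :: "nat set \<Rightarrow> 'a::field cl" where
  "cl_blade A = (\<lambda>C. if C = A then 1 else 0)"

lemma bsign_empty [simp]: "bsign eta {} C = 1" "bsign eta C {} = 1"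
  unfolding bsign_def by simp_all

lemma minus_one_power_cancel: "(-1::'a::comm_ring_1) ^ k * ((-1) ^ k * x) = x"
  by (simp add: minus_one_power_iff)

lemma cl_hat_hat [simp]: "cl_hat (cl_hat x) = x"
  by (rule ext) (simp only: cl_hat_def minus_one_power_cancel)

lemma cl_rev_apply: "cl_rev x A = (-1) ^ (card A choose 2) * x A"
  by (simp add: cl_rev_def choose_two)

lemma cl_rev_rev [simp]: "cl_rev (cl_rev x) = x"
  by (rule ext) (simp only: cl_rev_def minus_one_power_cancel)

lemma cl_hat_one [simp]: "cl_hat cl_one = cl_one"
  by (rule ext) (simp add: cl_hat_def cl_one_def)

lemma cl_rev_one [simp]: "cl_rev cl_one = cl_one"
  by (rule ext) (simp add: cl_rev_def cl_one_def)

lemma cl_scale_scale: "cl_scale a (cl_scale b x) = cl_scale (a * b) x"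
  by (simp add: cl_scale_def mult.assoc)

lemma cl_scale_one: "cl_scale 1 x = x"
  by (simp add: cl_scale_def)

lemma cl_scale_cancel: "cl_scale c x = cl_scale c y \<Longrightarrow> c \<noteq> 0 \<Longrightarrow> x = y"
  unfolding cl_scale_def by (rule ext) (metis mult_left_cancel)

lemma cl_one_carrier [simp]: "cl_one \<in> cl_carrier n"
  unfolding cl_carrier_def cl_one_def by auto

lemma cl_hat_carrier [simp]: "x \<in> cl_carrier n \<Longrightarrow> cl_hat x \<in> cl_carrier n"
  by (simp add: cl_hat_def cl_carrier_def)

lemma cl_rev_carrier [simp]: "x \<in> cl_carrier n \<Longrightarrow> cl_rev x \<in> cl_carrier n"
  by (simp add: cl_rev_def cl_carrier_def)

lemma cl_scale_carrier [simp]: "x \<in> cl_carrier n \<Longrightarrow> cl_scale c x \<in> cl_carrier n"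
  by (simp add: cl_scale_def cl_carrier_def)

lemma cl_add_carrier [simp]: "x \<in> cl_carrier n \<Longrightarrow> y \<in> cl_carrier n \<Longrightarrow> cl_add x y \<in> cl_carrier n"
  by (simp add: cl_add_def cl_carrier_def)

lemma cl_hat_grade: "x \<in> cl_grade n k \<Longrightarrow> cl_hat x = cl_scale ((-1) ^ k) x"
  by (rule ext) (auto simp: cl_grade_def cl_hat_def cl_scale_def)

lemma cl_rev_grade: "x \<in> cl_grade n k \<Longrightarrow> cl_rev x = cl_scale ((-1) ^ (k choose 2)) x"
  by (rule ext) (auto simp: cl_grade_def cl_rev_def cl_scale_def choose_two)

lemma cl_grade_carrier: "x \<in> cl_grade n k \<Longrightarrow> x \<in> cl_carrier n"
  unfolding cl_grade_def by blast

lemma cl_blade_grade: "A \<subseteq> {..<n} \<Longrightarrow> cl_blade A \<in> cl_grade n (card A)"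
  unfolding cl_grade_def cl_carrier_def cl_blade_def by auto

locale clifford =
  fixes n :: nat and eta :: "nat \<Rightarrow> 'a::field"
begin

abbreviation mul :: "'a cl \<Rightarrow> 'a cl \<Rightarrow> 'a cl" (infixl "\<odot>" 70) where
  "x \<odot> y \<equiv> cl_mul n eta x y"

lemma mul_apply:
  "(x \<odot> y) C = (if C \<subseteq> {..<n} then
     (\<Sum>A\<in>Pow {..<n}. x A * y (symdiff A C) * bsign eta A (symdiff A C)) else 0)"
proof -
  have inner: "(\<Sum>B\<in>Pow {..<n}. if (A - B) \<union> (B - A) = C then x A * y B * bsign eta A B else 0)
     = (if C \<subseteq> {..<n} then x A * y (symdiff A C) * bsign eta A (symdiff A C) else 0)"
    if "A \<in> Pow {..<n}" for A
  proof -
    have "(\<Sum>B\<in>Pow {..<n}. if (A - B) \<union> (B - A) = C then x A * y B * bsign eta A B else 0)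
        = (\<Sum>B\<in>Pow {..<n}. if B = symdiff A C then x A * y B * bsign eta A B else 0)"
      by (rule sum.cong) (auto simp: symdiff_eq_iff[symmetric] symdiff_def)
    also have "\<dots> = (if symdiff A C \<in> Pow {..<n} then x A * y (symdiff A C) * bsign eta A (symdiff A C) else 0)"
      by (simp add: sum.delta')
    also have "(symdiff A C \<in> Pow {..<n}) = (C \<subseteq> {..<n})"
      using that by (auto simp: symdiff_def)
    finally show ?thesis .
  qed
  have "(x \<odot> y) C = (\<Sum>A\<in>Pow {..<n}.
      if C \<subseteq> {..<n} then x A * y (symdiff A C) * bsign eta A (symdiff A C) else 0)"
    unfolding cl_mul_def by (rule sum.cong[OF refl]) (rule inner)
  then show ?thesis by (cases "C \<subseteq> {..<n}") simp_all
qed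

lemma mul_apply_right:
  assumes "C \<subseteq> {..<n}"
  shows "(x \<odot> y) C = (\<Sum>B\<in>Pow {..<n}. x (symdiff B C) * y B * bsign eta (symdiff B C) B)"
  unfolding mul_apply using assms
  by (simp, intro sum.reindex_bij_witness[where i="\<lambda>B. symdiff B C" and j="\<lambda>A. symdiff A C"])
     (auto simp: symdiff_subset)

lemma mul_carrier [simp]: "x \<odot> y \<in> cl_carrier n"
  unfolding cl_carrier_def by (auto simp: mul_apply)

lemma mul_assoc: "(x \<odot> y) \<odot> z = x \<odot> (y \<odot> z)"
proof (rule ext)
  fix D
  let ?s = "bsign eta" and ?P = "Pow {..<n}"
  show "((x \<odot> y) \<odot> z) D = (x \<odot> (y \<odot> z)) D"
  proof (cases "D \<subseteq> {..<n}")
    case False then show ?thesis by (simp add: mul_apply)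
  next
    case D: True
    have sign: "?s X Y * ?s (symdiff X Y) (symdiff Y (symdiff X D))
        = ?s Y (symdiff Y (symdiff X D)) * ?s X (symdiff X D)"
      if "X \<in> ?P" "Y \<in> ?P" for X Y
      using bsign_cocycle[of X Y "symdiff Y (symdiff X D)" eta] that D
      by (simp add: finite_subset_lessThan finite_symdiff)
    have "((x \<odot> y) \<odot> z) D =
      (\<Sum>A\<in>?P. \<Sum>X\<in>?P. x X * y (symdiff X A) * ?s X (symdiff X A) * z (symdiff A D) * ?s A (symdiff A D))"
      using D by (simp add: mul_apply[of x y] mul_apply[of _ z] sum_distrib_right)
    also have "\<dots> = (\<Sum>X\<in>?P. \<Sum>A\<in>?P. x X * y (symdiff X A) * ?s X (symdiff X A) * z (symdiff A D) * ?s A (symdiff A D))"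
      by (rule sum.swap)
    also have "\<dots> = (\<Sum>X\<in>?P. \<Sum>Y\<in>?P. x X * y Y * ?s X Y * z (symdiff (symdiff X Y) D) * ?s (symdiff X Y) (symdiff (symdiff X Y) D))"
      apply (rule sum.cong[OF refl])
      subgoal for X
        by (rule sum.reindex_bij_witness[where i="symdiff X" and j="symdiff X"]) (auto simp: symdiff_subset)
      done
    also have "\<dots> = (\<Sum>X\<in>?P. \<Sum>Y\<in>?P. x X * y Y * z (symdiff Y (symdiff X D)) * ?s Y (symdiff Y (symdiff X D)) * ?s X (symdiff X D))"
    proof (intro sum.cong refl)
      fix X Y assume "X \<in> ?P" "Y \<in> ?P"
      moreover have "symdiff (symdiff X Y) D = symdiff Y (symdiff X D)" unfolding symdiff_def by blast
      ultimately show "x X * y Y * ?s X Y * z (symdiff (symdiff X Y) D) * ?s (symdiff X Y) (symdiff (symdiff X Y) D)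
          = x X * y Y * z (symdiff Y (symdiff X D)) * ?s Y (symdiff Y (symdiff X D)) * ?s X (symdiff X D)"
        using sign by (simp add: mult_ac)
    qed
    also have "\<dots> = (x \<odot> (y \<odot> z)) D"
      using D by (simp add: mul_apply[of x] mul_apply[of y z] symdiff_subset sum_distrib_left sum_distrib_right mult.assoc)
    finally show ?thesis .
  qed
qed

lemma one_mul:
  assumes "x \<in> cl_carrier n" shows "cl_one \<odot> x = x"
proof (rule ext)
  fix C
  have "(\<Sum>A\<in>Pow {..<n}. cl_one A * x (symdiff A C) * bsign eta A (symdiff A C))
      = (\<Sum>A\<in>Pow {..<n}. if A = {} then x C else 0)"
    by (rule sum.cong) (auto simp: cl_one_def)
  then show "(cl_one \<odot> x) C = x C"
    using assms by (simp add: mul_apply cl_carrier_def sum.delta')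
qed

lemma mul_one:
  assumes "x \<in> cl_carrier n" shows "x \<odot> cl_one = x"
proof (rule ext)
  fix C
  have "(\<Sum>A\<in>Pow {..<n}. x A * cl_one (symdiff A C) * bsign eta A (symdiff A C))
      = (\<Sum>A\<in>Pow {..<n}. if A = C then x C else 0)"
    by (rule sum.cong) (auto simp: cl_one_def symdiff_def)
  then show "(x \<odot> cl_one) C = x C"
    using assms by (simp add: mul_apply cl_carrier_def sum.delta')
qed

lemma scale_mul: "cl_scale c x \<odot> y = cl_scale c (x \<odot> y)"
  by (rule ext) (simp add: mul_apply cl_scale_def sum_distrib_left mult.assoc)

lemma mul_scale: "x \<odot> cl_scale c y = cl_scale c (x \<odot> y)"
  by (rule ext) (simp add: mul_apply cl_scale_def sum_distrib_left mult_ac)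

lemma mul_add: "x \<odot> cl_add y y' = cl_add (x \<odot> y) (x \<odot> y')"
  by (rule ext) (simp add: mul_apply cl_add_def sum.distrib algebra_simps)

lemma hat_mul: "cl_hat (x \<odot> y) = cl_hat x \<odot> cl_hat y"
proof (rule ext)
  fix C
  show "cl_hat (x \<odot> y) C = (cl_hat x \<odot> cl_hat y) C"
  proof (cases "C \<subseteq> {..<n}")
    case False then show ?thesis by (simp add: mul_apply cl_hat_def)
  next
    case C: True
    have summand: "(-1) ^ card C * (x A * y (symdiff A C) * bsign eta A (symdiff A C))
        = cl_hat x A * cl_hat y (symdiff A C) * bsign eta A (symdiff A C)"
      if "A \<in> Pow {..<n}" for A
    proof -
      have "(-1::'a) ^ card C = (-1) ^ card A * (-1) ^ card (symdiff A C)"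
        using minus_one_power_card_symdiff[of A C] that C by (simp add: finite_subset_lessThan)
      then show ?thesis unfolding cl_hat_def by (simp only: mult_ac)
    qed
    have "cl_hat (x \<odot> y) C
        = (\<Sum>A\<in>Pow {..<n}. (-1) ^ card C * (x A * y (symdiff A C) * bsign eta A (symdiff A C)))"
      using C by (simp add: cl_hat_def mul_apply sum_distrib_left)
    also have "\<dots> = (\<Sum>A\<in>Pow {..<n}. cl_hat x A * cl_hat y (symdiff A C) * bsign eta A (symdiff A C))"
      by (rule sum.cong[OF refl]) (rule summand)
    also have "\<dots> = (cl_hat x \<odot> cl_hat y) C"
      using C by (simp add: mul_apply)
    finally show ?thesis .
  qed
qed

lemma rev_mul: "cl_rev (x \<odot> y) = cl_rev y \<odot> cl_rev x"
proof (rule ext)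
  fix C
  show "cl_rev (x \<odot> y) C = (cl_rev y \<odot> cl_rev x) C"
  proof (cases "C \<subseteq> {..<n}")
    case False then show ?thesis by (simp add: mul_apply cl_rev_def)
  next
    case C: True
    have summand: "(-1) ^ (card C choose 2) * (x A * y (symdiff A C) * bsign eta A (symdiff A C))
        = cl_rev y (symdiff A C) * cl_rev x A * bsign eta (symdiff A C) A"
      if "A \<in> Pow {..<n}" for A
    proof -
      have "(-1::'a) ^ (card C choose 2) * bsign eta A (symdiff A C) =
          (-1) ^ (card A choose 2) * (-1) ^ (card (symdiff A C) choose 2) * bsign eta (symdiff A C) A"
        using bsign_reverse[of A "symdiff A C" eta] that C
        by (simp add: finite_subset_lessThan finite_symdiff)
      then show ?thesis
        unfolding cl_rev_apply by (simp only: mult_ac)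
    qed
    have "cl_rev (x \<odot> y) C
        = (\<Sum>A\<in>Pow {..<n}. (-1) ^ (card C choose 2) * (x A * y (symdiff A C) * bsign eta A (symdiff A C)))"
      using C by (simp add: cl_rev_apply mul_apply sum_distrib_left)
    also have "\<dots> = (\<Sum>A\<in>Pow {..<n}. cl_rev y (symdiff A C) * cl_rev x A * bsign eta (symdiff A C) A)"
      by (rule sum.cong[OF refl]) (rule summand)
    also have "\<dots> = (cl_rev y \<odot> cl_rev x) C"
      using C by (simp add: mul_apply_right)
    finally show ?thesis .
  qed
qed

lemma inverse_unique:
  assumes "y \<in> cl_carrier n" "z \<in> cl_carrier n" "x \<odot> y = cl_one" "z \<odot> x = cl_one"
  shows "y = z"
  by (metis assms mul_assoc one_mul mul_one)

lemma unitI: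
  "x \<in> cl_carrier n \<Longrightarrow> y \<in> cl_carrier n \<Longrightarrow> x \<odot> y = cl_one \<Longrightarrow> y \<odot> x = cl_one \<Longrightarrow> x \<in> cl_units n eta"
  unfolding cl_units_def by blast

lemma unit_carrier: "x \<in> cl_units n eta \<Longrightarrow> x \<in> cl_carrier n"
  unfolding cl_units_def by blast

lemma unit_inverse:
  assumes "x \<in> cl_units n eta"
  shows "cl_inv n eta x \<in> cl_carrier n" "x \<odot> cl_inv n eta x = cl_one" "cl_inv n eta x \<odot> x = cl_one"
proof -
  obtain y where y: "y \<in> cl_carrier n" "x \<odot> y = cl_one" "y \<odot> x = cl_one"
    using assms unfolding cl_units_def by blast
  have "cl_inv n eta x = y"
    unfolding cl_inv_def by (rule the_equality) (use y inverse_unique in blast)+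
  with y show "cl_inv n eta x \<in> cl_carrier n" "x \<odot> cl_inv n eta x = cl_one" "cl_inv n eta x \<odot> x = cl_one"
    by simp_all
qed

lemma one_unit: "cl_one \<in> cl_units n eta"
  by (rule unitI[where y=cl_one]) (simp_all add: one_mul)

lemma mul_unit: "x \<in> cl_units n eta \<Longrightarrow> y \<in> cl_units n eta \<Longrightarrow> x \<odot> y \<in> cl_units n eta"
  using unit_inverse[of x] unit_inverse[of y]
  by (intro unitI[where y="cl_inv n eta y \<odot> cl_inv n eta x"])
     (simp_all add: mul_assoc, simp_all add: mul_assoc[symmetric] one_mul unit_carrier)

lemma rev_unit: "x \<in> cl_units n eta \<Longrightarrow> cl_rev x \<in> cl_units n eta"
  using unit_inverse[of x]
  by (intro unitI[where y="cl_rev (cl_inv n eta x)"]) (auto simp: unit_carrier simp flip: rev_mul)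

lemma unit_cancel_left: "x \<in> cl_units n eta \<Longrightarrow> z \<in> cl_carrier n \<Longrightarrow> x \<odot> z = x \<Longrightarrow> z = cl_one"
  by (metis mul_assoc one_mul unit_inverse(3))

lemma unit_cancel_right: "x \<in> cl_units n eta \<Longrightarrow> z \<in> cl_carrier n \<Longrightarrow> z \<odot> x = x \<Longrightarrow> z = cl_one"
  by (metis mul_assoc mul_one unit_inverse(2))

end

section \<open>The centralizer of C^k\<close>

lemma bsign_nonzero: "(\<And>i. eta i \<noteq> 0) \<Longrightarrow> bsign eta A B \<noteq> (0::'a::field)"
  unfolding bsign_eq_inversions by (cases "finite (A \<inter> B)") auto

lemma cl_scalar_pseudo_iff:
  "X \<in> cl_scalar_pseudo n \<longleftrightarrow> X \<in> cl_carrier n \<and> (\<forall>B. B \<noteq> {} \<and> B \<noteq> {..<n} \<longrightarrow> X B = 0)"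
proof -
  have iff: "card B = 0 \<or> card B = n \<longleftrightarrow> B = {} \<or> B = {..<n}" if "B \<subseteq> {..<n}" for B
    using finite_subset_lessThan[OF that] card_subset_eq[OF finite_lessThan that] by auto
  show ?thesis
    unfolding cl_scalar_pseudo_def cl_carrier_def mem_Collect_eq
  proof (intro iffI conjI allI impI)
    fix B :: "nat set" assume "(\<forall>A. \<not> A \<subseteq> {..<n} \<longrightarrow> X A = 0) \<and> (\<forall>A. card A \<noteq> 0 \<and> card A \<noteq> n \<longrightarrow> X A = 0)"
      "B \<noteq> {} \<and> B \<noteq> {..<n}"
    then show "X B = 0" using iff[of B] by (cases "B \<subseteq> {..<n}") auto
  next
    fix A :: "nat set" assume "(\<forall>A. \<not> A \<subseteq> {..<n} \<longrightarrow> X A = 0) \<and> (\<forall>B. B \<noteq> {} \<and> B \<noteq> {..<n} \<longrightarrow> X B = 0)"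
      "card A \<noteq> 0 \<and> card A \<noteq> n"
    then show "X A = 0" using iff[of A] by (cases "A \<subseteq> {..<n}") auto
  qed auto
qed

lemma exists_subset_card_inter:
  assumes B: "B \<subseteq> {..<n}" and "j \<le> card B" "j \<le> k" "k - j \<le> n - card B"
  shows "\<exists>A\<subseteq>{..<n}. card A = k \<and> card (A \<inter> B) = j"
proof -
  obtain A1 where A1: "A1 \<subseteq> B" "card A1 = j" "finite A1"
    using obtain_subset_with_card_n[OF assms(2)] by blast
  have "card ({..<n} - B) = n - card B"
    using B finite_subset_lessThan[OF B] by (simp add: card_Diff_subset)
  then obtain A2 where A2: "A2 \<subseteq> {..<n} - B" "card A2 = k - j" "finite A2"
    using obtain_subset_with_card_n[of "k - j" "{..<n} - B"] assms(4) by auto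
  have "card (A1 \<union> A2) = k"
    using card_Un_disjoint[OF A1(3) A2(3)] A1 A2 assms(3) by auto
  moreover have "(A1 \<union> A2) \<inter> B = A1" "A1 \<union> A2 \<subseteq> {..<n}" using A1 A2 B by auto
  ultimately show ?thesis using A1 by metis
qed

text \<open>By bsign_swap, e_A and e_B anticommute exactly when card A * card B + card (A \<inter> B) is
  odd.\<close>
lemma exists_subset_odd_overlap:
  assumes B: "B \<subseteq> {..<n}" "0 < card B" "card B < n" and k: "1 \<le> k" "k < n"
  shows "\<exists>A\<subseteq>{..<n}. card A = k \<and> odd (k * card B + card (A \<inter> B))"
proof -
  define j where "j = (if odd (k * card B + min k (card B)) then min k (card B) else min k (card B) - 1)"
  have "odd (k * card B + j)" "j \<le> card B" "j \<le> k" "k - j \<le> n - card B"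
    using B k unfolding j_def by (auto simp: min_def split: if_splits)
  then show ?thesis using exists_subset_card_inter[OF B(1)] by metis
qed

context clifford
begin

definition centralizes :: "nat \<Rightarrow> 'a cl \<Rightarrow> bool" where
  "centralizes k X \<longleftrightarrow> (\<forall>U \<in> cl_grade n k. X \<odot> U = U \<odot> X)"

lemma mul_blade_right:
  assumes "A \<subseteq> {..<n}" "C \<subseteq> {..<n}"
  shows "(x \<odot> cl_blade A) C = x (symdiff A C) * bsign eta (symdiff A C) A"
proof -
  have "(\<Sum>D\<in>Pow {..<n}. x (symdiff D C) * cl_blade A D * bsign eta (symdiff D C) D)
      = (\<Sum>D\<in>Pow {..<n}. if D = A then x (symdiff A C) * bsign eta (symdiff A C) A else 0)"
    by (rule sum.cong) (auto simp: cl_blade_def)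
  then show ?thesis using assms by (simp add: mul_apply_right sum.delta')
qed

lemma mul_blade_left:
  assumes "A \<subseteq> {..<n}" "C \<subseteq> {..<n}"
  shows "(cl_blade A \<odot> x) C = x (symdiff A C) * bsign eta A (symdiff A C)"
proof -
  have "(\<Sum>D\<in>Pow {..<n}. cl_blade A D * x (symdiff D C) * bsign eta D (symdiff D C))
      = (\<Sum>D\<in>Pow {..<n}. if D = A then x (symdiff A C) * bsign eta A (symdiff A C) else 0)"
    by (rule sum.cong) (auto simp: cl_blade_def)
  then show ?thesis using assms by (simp add: mul_apply sum.delta')
qed

end

text \<open>Characteristic 0 is only needed to cancel 2 in 2 x = 0.\<close>
locale nondegenerate_clifford = clifford n eta
  for n :: nat and eta :: "nat \<Rightarrow> 'a::field_char_0" +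
  assumes eta_nonzero: "eta i \<noteq> 0"
begin

lemma commutes_blade_coeff_zero:
  assumes commutes: "X \<odot> cl_blade A = cl_blade A \<odot> X"
    and A: "A \<subseteq> {..<n}" and B: "B \<subseteq> {..<n}" and odd: "odd (card A * card B + card (A \<inter> B))"
  shows "X B = 0"
proof -
  have C: "symdiff A B \<subseteq> {..<n}" using A B by (rule symdiff_subset)
  have "X B * bsign eta B A = X B * bsign eta A B"
    using fun_cong[OF commutes, of "symdiff A B"] mul_blade_right[OF A C] mul_blade_left[OF A C] by simp
  moreover have "bsign eta B A = - bsign eta A B"
    using bsign_swap[of A B eta] odd A B by (simp add: finite_subset_lessThan)
  ultimately have "2 * (X B * bsign eta A B) = 0" by simp
  then show ?thesis using bsign_nonzero[of eta A B] eta_nonzero by simp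
qed

lemma centralizes_imp_scalar_pseudo:
  assumes k: "1 \<le> k" "k < n" and X: "X \<in> cl_carrier n" and "centralizes k X"
  shows "X \<in> cl_scalar_pseudo n"
  unfolding cl_scalar_pseudo_iff
proof (intro conjI allI impI X)
  fix B assume B: "B \<noteq> {} \<and> B \<noteq> {..<n}"
  show "X B = 0"
  proof (cases "B \<subseteq> {..<n}")
    case True
    then have "0 < card B" "card B < n"
      using B finite_subset_lessThan[OF True] psubset_card_mono[of "{..<n}" B] by auto
    then obtain A where A: "A \<subseteq> {..<n}" "card A = k" "odd (k * card B + card (A \<inter> B))"
      using exists_subset_odd_overlap[OF True _ _ k] by blast
    have "X \<odot> cl_blade A = cl_blade A \<odot> X"
      using \<open>centralizes k X\<close> cl_blade_grade[OF A(1)] A(2) unfolding centralizes_def by metis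
    then show ?thesis using commutes_blade_coeff_zero[OF _ A(1) True] A by simp
  next
    case False then show ?thesis using X by (simp add: cl_carrier_def)
  qed
qed

lemma centralizes_pseudo_coeff_zero:
  assumes "k \<le> n" "odd (k * (n - 1))" "centralizes k X"
  shows "X {..<n} = 0"
proof -
  obtain A where A: "A \<subseteq> {..<n}" "card A = k"
    using obtain_subset_with_card_n[of k "{..<n}"] assms(1) by auto
  have "X \<odot> cl_blade A = cl_blade A \<odot> X"
    using assms(3) cl_blade_grade[OF A(1)] A(2) unfolding centralizes_def by metis
  moreover have "odd (card A * card {..<n} + card (A \<inter> {..<n}))"
  proof -
    have "n \<ge> 1" using assms(2) by (cases n) auto
    then have "k * n + k = k * (n - 1) + 2 * k" by (cases n) (auto simp: algebra_simps)
    then show ?thesis using assms(2) A by (simp add: Int_absorb2)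
  qed
  ultimately show ?thesis using commutes_blade_coeff_zero[OF _ A(1), of X "{..<n}"] by simp
qed

end

section \<open>The subspace C^0 + C^n\<close>

lemma sum_Pow_two_terms:
  assumes "0 < (n::nat)" and "\<And>D. D \<subseteq> {..<n} \<Longrightarrow> D \<noteq> {} \<Longrightarrow> D \<noteq> {..<n} \<Longrightarrow> f D = 0"
  shows "(\<Sum>D\<in>Pow {..<n}. f D) = f {} + f {..<n}"
proof -
  have "(\<Sum>D\<in>Pow {..<n}. f D) = (\<Sum>D\<in>{{}, {..<n}}. f D)"
    by (rule sum.mono_neutral_right) (use assms in auto)
  also have "\<dots> = f {} + f {..<n}" using assms(1) by (subst sum.insert) auto
  finally show ?thesis .
qed

lemma scalar_pseudo_coeff_zero:
  "X \<in> cl_scalar_pseudo n \<Longrightarrow> B \<noteq> {} \<Longrightarrow> B \<noteq> {..<n} \<Longrightarrow> X B = 0"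
  unfolding cl_scalar_pseudo_iff by blast

lemma scalar_pseudo_carrier: "X \<in> cl_scalar_pseudo n \<Longrightarrow> X \<in> cl_carrier n"
  unfolding cl_scalar_pseudo_def by blast

lemma scalar_pseudo_one: "cl_one \<in> cl_scalar_pseudo n"
  by (simp add: cl_scalar_pseudo_def) (simp add: cl_one_def)

lemma scalar_pseudo_scale: "X \<in> cl_scalar_pseudo n \<Longrightarrow> cl_scale c X \<in> cl_scalar_pseudo n"
  by (auto simp: cl_scalar_pseudo_def cl_scale_def cl_carrier_def)

lemma scalar_pseudo_add:
  "X \<in> cl_scalar_pseudo n \<Longrightarrow> Y \<in> cl_scalar_pseudo n \<Longrightarrow> cl_add X Y \<in> cl_scalar_pseudo n"
  by (auto simp: cl_scalar_pseudo_def cl_add_def cl_carrier_def)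

lemma scalar_pseudo_hat: "X \<in> cl_scalar_pseudo n \<Longrightarrow> cl_hat X \<in> cl_scalar_pseudo n"
  by (auto simp: cl_scalar_pseudo_def cl_hat_def cl_carrier_def)

lemma scalar_pseudo_blade: "cl_blade {..<n} \<in> cl_scalar_pseudo n"
  by (auto simp: cl_scalar_pseudo_def cl_blade_def cl_carrier_def)

lemma scalar_pseudo_eq_scale_one:
  assumes "X \<in> cl_scalar_pseudo n" "X {..<n} = 0"
  shows "X = cl_scale (X {}) cl_one"
  using assms scalar_pseudo_coeff_zero[OF assms(1)]
  by (intro ext) (auto simp: cl_scale_def cl_one_def)

lemma hat_scalar_pseudo_even:
  assumes "X \<in> cl_scalar_pseudo n" "even n"
  shows "cl_hat X = X"
proof (rule ext)
  fix C show "cl_hat X C = X C"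
    using assms scalar_pseudo_coeff_zero[OF assms(1), of C]
    by (cases "C = {} \<or> C = {..<n}") (auto simp: cl_hat_def)
qed

context clifford
begin

lemma mul_scalar_pseudo_left:
  assumes "0 < n" "X \<in> cl_scalar_pseudo n" "C \<subseteq> {..<n}"
  shows "(X \<odot> y) C = X {} * y C + X {..<n} * y (symdiff {..<n} C) * bsign eta {..<n} (symdiff {..<n} C)"
  using assms scalar_pseudo_coeff_zero[OF assms(2)]
  by (simp add: mul_apply sum_Pow_two_terms[OF assms(1)])

lemma mul_scalar_pseudo_right:
  assumes "0 < n" "X \<in> cl_scalar_pseudo n" "C \<subseteq> {..<n}"
  shows "(y \<odot> X) C = y C * X {} + y (symdiff {..<n} C) * X {..<n} * bsign eta (symdiff {..<n} C) {..<n}"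
  using assms scalar_pseudo_coeff_zero[OF assms(2)]
  by (simp add: mul_apply_right sum_Pow_two_terms[OF assms(1)] symdiff_commute)

lemma mul_scalar_pseudo:
  assumes n: "0 < n" and X: "X \<in> cl_scalar_pseudo n" and Y: "Y \<in> cl_scalar_pseudo n"
  shows "X \<odot> Y = (\<lambda>C.
      if C = {} then X {} * Y {} + X {..<n} * Y {..<n} * bsign eta {..<n} {..<n}
      else if C = {..<n} then X {} * Y {..<n} + X {..<n} * Y {}
      else 0)"
proof (rule ext)
  fix C
  have "symdiff {..<n} C = {} \<longleftrightarrow> C = {..<n}" "symdiff {..<n} C = {..<n} \<longleftrightarrow> C = {}"
    if "C \<subseteq> {..<n}" using that unfolding symdiff_def by blast+
  then show "(X \<odot> Y) C = (if C = {} then X {} * Y {} + X {..<n} * Y {..<n} * bsign eta {..<n} {..<n}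
      else if C = {..<n} then X {} * Y {..<n} + X {..<n} * Y {} else 0)"
    using n mul_scalar_pseudo_left[OF n X, of C Y] scalar_pseudo_coeff_zero[OF Y]
    by (cases "C \<subseteq> {..<n}") (auto simp: mul_apply)
qed

lemma bsign_top_swap:
  assumes "D \<subseteq> {..<n}"
  shows "bsign eta D {..<n} = (-1) ^ ((n + 1) * card D) * bsign eta {..<n} D"
proof -
  have "{..<n} \<inter> D = D" using assms by auto
  then show ?thesis
    using bsign_swap[of "{..<n}" D eta] finite_subset_lessThan[OF assms] by (simp add: algebra_simps)
qed

text \<open>For odd n the pseudoscalar e_N commutes with every blade.\<close>
lemma scalar_pseudo_center_odd:
  assumes n: "odd n" and X: "X \<in> cl_scalar_pseudo n"
  shows "X \<in> cl_center n eta"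
  unfolding cl_center_def
proof (intro CollectI conjI ballI ext scalar_pseudo_carrier[OF X])
  fix y C
  show "(X \<odot> y) C = (y \<odot> X) C"
  proof (cases "C \<subseteq> {..<n}")
    case False then show ?thesis by (simp add: mul_apply)
  next
    case True
    have "bsign eta (symdiff {..<n} C) {..<n} = bsign eta {..<n} (symdiff {..<n} C)"
      using bsign_top_swap[of "symdiff {..<n} C"] True n by (simp add: symdiff_subset)
    then show ?thesis
      using mul_scalar_pseudo_left[OF _ X True, of y] mul_scalar_pseudo_right[OF _ X True, of y] n
      by (simp add: odd_pos mult_ac)
  qed
qed

lemma blade_top_mul_even:
  assumes "even n"
  shows "cl_blade {..<n} \<odot> y = cl_hat y \<odot> cl_blade {..<n}"
proof (rule ext)
  fix C
  show "(cl_blade {..<n} \<odot> y) C = (cl_hat y \<odot> cl_blade {..<n}) C"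
  proof (cases "C \<subseteq> {..<n}")
    case False then show ?thesis by (simp add: mul_apply)
  next
    case True
    let ?D = "symdiff {..<n} C"
    have "(-1) ^ card ?D * (-1) ^ ((n + 1) * card ?D) = (1::'a)"
      using assms by (simp add: power_add[symmetric] minus_one_power_iff)
    then show ?thesis
      using mul_blade_left[OF _ True, of "{..<n}" y] mul_blade_right[OF _ True, of "{..<n}" "cl_hat y"]
        bsign_top_swap[of ?D] True
      by (simp add: cl_hat_def symdiff_subset mult_ac)
  qed
qed

lemma one_center: "cl_one \<in> cl_center n eta"
  unfolding cl_center_def by (auto simp: one_mul mul_one)

lemma scale_center: "z \<in> cl_center n eta \<Longrightarrow> cl_scale c z \<in> cl_center n eta"
  unfolding cl_center_def by (auto simp: scale_mul mul_scale)

end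

section \<open>Elements of Gamma^k\<close>

lemma hat_eq_sign_imp_parity:
  fixes T :: "'a::field_char_0 cl"
  assumes T: "T \<in> cl_carrier n" and j: "j < 2" and hat: "cl_hat T = cl_scale ((-1) ^ j) T"
  shows "T \<in> cl_parity n j"
  unfolding cl_parity_def
proof (intro CollectI conjI allI impI T)
  fix A :: "nat set" assume "card A mod 2 \<noteq> j"
  then have "(-1::'a) ^ card A = - ((-1) ^ j)"
    using j by (auto simp: minus_one_power_iff) presburger+
  moreover have "(-1) ^ card A * T A = (-1) ^ j * T A"
    using fun_cong[OF hat, of A] by (simp add: cl_hat_def cl_scale_def)
  ultimately show "T A = 0" by simp
qed

lemma add_sign_hat_parity:
  fixes T :: "'a::field_char_0 cl"
  assumes "T \<in> cl_carrier n" "j < 2"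
  shows "cl_add T (cl_scale ((-1) ^ j) (cl_hat T)) \<in> cl_parity n j"
  using assms
  by (intro hat_eq_sign_imp_parity cl_add_carrier cl_scale_carrier cl_hat_carrier)
     (auto simp: cl_add_def cl_scale_def cl_hat_def fun_eq_iff algebra_simps)

context clifford
begin

lemma cl_PI:
  assumes "W \<in> cl_center n eta" "W \<in> cl_units n eta" "T' \<in> cl_parity n j" "j < 2"
    "T' \<in> cl_units n eta" "T = W \<odot> T'"
  shows "T \<in> cl_P n eta"
proof -
  have "j = 0 \<or> j = 1" using assms(4) by auto
  then show ?thesis
    unfolding cl_P_def cl_invertibles_def using assms by blast
qed

lemma Gamma_unit: "T \<in> cl_Gamma n eta k \<Longrightarrow> T \<in> cl_units n eta"
  unfolding cl_Gamma_def by blast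

text \<open>Applying the grade involution to T U T^-1, which lies in C^k with U, gives
  hat T U hat T^-1 = T U T^-1.\<close>
lemma Gamma_inv_mul_hat_centralizes:
  assumes T: "T \<in> cl_Gamma n eta k"
  shows "centralizes k (cl_inv n eta T \<odot> cl_hat T)"
  unfolding centralizes_def
proof
  fix U :: "'a cl" assume U: "U \<in> cl_grade n k"
  define Ti where "Ti = cl_inv n eta T"
  note inv = unit_inverse[OF Gamma_unit[OF T], folded Ti_def]
  have conj: "T \<odot> U \<odot> Ti \<in> cl_grade n k" using T U unfolding cl_Gamma_def Ti_def by blast
  have "cl_scale ((-1) ^ k) (T \<odot> U \<odot> Ti) = cl_scale ((-1) ^ k) (cl_hat T \<odot> U \<odot> cl_hat Ti)"
    by (simp add: cl_hat_grade[OF conj, symmetric] hat_mul cl_hat_grade[OF U] scale_mul mul_scale)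
  then have conj_eq: "cl_hat T \<odot> U \<odot> cl_hat Ti = T \<odot> U \<odot> Ti" by (rule cl_scale_cancel[symmetric]) simp
  have hat_inv: "cl_hat Ti \<odot> cl_hat T = cl_one" using inv by (metis hat_mul cl_hat_one)
  have "Ti \<odot> cl_hat T \<odot> U = Ti \<odot> (cl_hat T \<odot> U \<odot> cl_hat Ti \<odot> cl_hat T)"
    using hat_inv cl_grade_carrier[OF U] by (simp add: mul_assoc mul_one)
  also have "\<dots> = (Ti \<odot> T) \<odot> U \<odot> (Ti \<odot> cl_hat T)" by (simp only: conj_eq) (simp add: mul_assoc)
  also have "\<dots> = U \<odot> (Ti \<odot> cl_hat T)" using inv cl_grade_carrier[OF U] by (simp add: one_mul)
  finally show "cl_inv n eta T \<odot> cl_hat T \<odot> U = U \<odot> (cl_inv n eta T \<odot> cl_hat T)" unfolding Ti_def .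
qed

lemma Gamma_rev_mul_centralizes:
  assumes T: "T \<in> cl_Gamma n eta k"
  shows "centralizes k (cl_rev T \<odot> T)"
  unfolding centralizes_def
proof
  fix U :: "'a cl" assume U: "U \<in> cl_grade n k"
  define Ti where "Ti = cl_inv n eta T"
  note inv = unit_inverse[OF Gamma_unit[OF T], folded Ti_def]
  have conj: "T \<odot> U \<odot> Ti \<in> cl_grade n k" using T U unfolding cl_Gamma_def Ti_def by blast
  have "cl_scale ((-1) ^ (k choose 2)) (T \<odot> U \<odot> Ti) = cl_rev (T \<odot> U \<odot> Ti)"
    by (rule cl_rev_grade[OF conj, symmetric])
  also have "\<dots> = cl_scale ((-1) ^ (k choose 2)) (cl_rev Ti \<odot> U \<odot> cl_rev T)"
    by (simp add: rev_mul cl_rev_grade[OF U] scale_mul mul_scale mul_assoc)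
  finally have conj_eq: "cl_rev Ti \<odot> U \<odot> cl_rev T = T \<odot> U \<odot> Ti" by (rule cl_scale_cancel[symmetric]) simp
  have rev_inv: "cl_rev T \<odot> cl_rev Ti = cl_one" using inv by (metis rev_mul cl_rev_one)
  have "cl_rev T \<odot> T \<odot> U = cl_rev T \<odot> (T \<odot> U \<odot> Ti \<odot> T)"
    using inv cl_grade_carrier[OF U] by (simp add: mul_assoc mul_one)
  also have "\<dots> = (cl_rev T \<odot> cl_rev Ti) \<odot> U \<odot> (cl_rev T \<odot> T)"
    by (simp only: conj_eq[symmetric]) (simp add: mul_assoc)
  also have "\<dots> = U \<odot> (cl_rev T \<odot> T)" using rev_inv cl_grade_carrier[OF U] by (simp add: one_mul)
  finally show "cl_rev T \<odot> T \<odot> U = U \<odot> (cl_rev T \<odot> T)" .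
qed

lemma mul_hat_scalar_pseudo_odd:
  assumes n: "odd n" and X: "X \<in> cl_scalar_pseudo n"
  defines "c \<equiv> X {} * X {} - X {..<n} * X {..<n} * bsign eta {..<n} {..<n}"
  shows "X \<odot> cl_hat X = cl_scale c cl_one" "cl_hat X \<odot> X = cl_scale c cl_one"
proof -
  have n0: "0 < n" and ne: "{..<n} \<noteq> {}" using n odd_pos by auto
  have "cl_hat X {} = X {}" "cl_hat X {..<n} = - X {..<n}" using n by (simp_all add: cl_hat_def)
  then show "X \<odot> cl_hat X = cl_scale c cl_one" "cl_hat X \<odot> X = cl_scale c cl_one"
    unfolding mul_scalar_pseudo[OF n0 X scalar_pseudo_hat[OF X]] mul_scalar_pseudo[OF n0 scalar_pseudo_hat[OF X] X]
    using ne by (auto simp: fun_eq_iff cl_scale_def cl_one_def c_def algebra_simps)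
qed

lemma scalar_pseudo_invertible_odd:
  assumes n: "odd n" and V: "V \<in> cl_scalar_pseudo n"
    and c: "V {} * V {} - V {..<n} * V {..<n} * bsign eta {..<n} {..<n} = c" "c \<noteq> 0"
  defines "W \<equiv> cl_scale (1 / c) (cl_hat V)"
  shows "V \<in> cl_units n eta" "W \<in> cl_units n eta" "W \<in> cl_center n eta" "W \<odot> V = cl_one"
proof -
  note prod = mul_hat_scalar_pseudo_odd[OF n V, unfolded c(1)]
  have WV: "W \<odot> V = cl_one" and VW: "V \<odot> W = cl_one"
    unfolding W_def using c(2) by (simp_all add: scale_mul mul_scale prod cl_scale_scale cl_scale_one)
  have carrier: "V \<in> cl_carrier n" "W \<in> cl_carrier n"
    using V unfolding W_def by (simp_all add: scalar_pseudo_carrier)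
  show "V \<in> cl_units n eta" "W \<in> cl_units n eta" using unitI carrier WV VW by blast+
  show "W \<in> cl_center n eta"
    unfolding W_def by (intro scale_center scalar_pseudo_center_odd n scalar_pseudo_hat V)
  show "W \<odot> V = cl_one" by (rule WV)
qed

end

context nondegenerate_clifford
begin

text \<open>Here e_N T = hat T e_N = b s T with s = e_N e_N, so (b e_N) T = b^2 s T = T would make
  b e_N the identity.\<close>
lemma hat_eq_mul_pseudoscalar_absurd:
  assumes n: "even n" "0 < n" and T: "T \<in> cl_units n eta"
    and b: "b * b * bsign eta {..<n} {..<n} = 1"
    and hat: "cl_hat T = T \<odot> cl_scale b (cl_blade {..<n})"
  shows False
proof -
  let ?e = "cl_blade {..<n} :: 'a cl" and ?s = "bsign eta {..<n} {..<n}"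
  have T_carrier: "T \<in> cl_carrier n" by (rule unit_carrier[OF T])
  have square: "?e \<odot> ?e = cl_scale ?s cl_one"
    using n(2) unfolding mul_scalar_pseudo[OF n(2) scalar_pseudo_blade scalar_pseudo_blade]
    by (auto simp: fun_eq_iff cl_blade_def cl_scale_def cl_one_def)
  have "?e \<odot> T = T \<odot> cl_scale b ?e \<odot> ?e" by (simp add: blade_top_mul_even[OF n(1)] hat)
  also have "\<dots> = cl_scale (b * ?s) T"
    using T_carrier by (simp add: mul_assoc scale_mul mul_scale square mul_one cl_scale_scale)
  finally have "cl_scale b ?e \<odot> T = T"
    using T_carrier by (simp add: scale_mul cl_scale_scale mult.assoc[symmetric] b cl_scale_one)
  then have "cl_scale b ?e = cl_one"
    using scalar_pseudo_carrier[OF scalar_pseudo_scale[OF scalar_pseudo_blade]]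
    by (intro unit_cancel_right[OF T]) simp_all
  then have "cl_scale b ?e {} = cl_one {}" by simp
  then show False using n(2) by (auto simp: cl_scale_def cl_blade_def cl_one_def split: if_splits)
qed

lemma cl_P_if_hat_eq_mul_even:
  assumes n: "even n" "0 < n" and T: "T \<in> cl_units n eta" and X: "X \<in> cl_scalar_pseudo n"
    and hat: "cl_hat T = T \<odot> X" and X_hat: "X \<odot> cl_hat X = cl_one"
  shows "T \<in> cl_P n eta"
proof -
  let ?a = "X {}" and ?b = "X {..<n}" and ?s = "bsign eta {..<n} {..<n}"
  have ne: "{..<n} \<noteq> {}" using n(2) by auto
  note square = X_hat[unfolded hat_scalar_pseudo_even[OF X n(1)] mul_scalar_pseudo[OF n(2) X X]]
  have a: "?a * ?a + ?b * ?b * ?s = 1" using fun_cong[OF square, of "{}"] by (simp add: cl_one_def)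
  have ab: "2 * (?a * ?b) = 0" using fun_cong[OF square, of "{..<n}"] ne by (simp add: cl_one_def)
  have "?b = 0"
  proof (rule ccontr)
    assume "?b \<noteq> 0"
    then have "?a = 0" using ab by simp
    have "X = cl_scale ?b (cl_blade {..<n})"
    proof (rule ext)
      fix C show "X C = cl_scale ?b (cl_blade {..<n}) C"
        using scalar_pseudo_coeff_zero[OF X, of C] \<open>?a = 0\<close> ne
        by (cases "C = {} \<or> C = {..<n}") (auto simp: cl_scale_def cl_blade_def)
    qed
    then show False using hat_eq_mul_pseudoscalar_absurd[OF n T, of ?b] a hat \<open>?a = 0\<close> by simp
  qed
  then have X_scalar: "X = cl_scale ?a cl_one" and "?a * ?a = 1"
    using scalar_pseudo_eq_scale_one[OF X] a by simp_all
  define j :: nat where "j = (if ?a = 1 then 0 else 1)"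
  have j: "j < 2" "?a = (-1) ^ j" using \<open>?a * ?a = 1\<close> by (auto simp: j_def square_eq_1_iff)
  have "cl_hat T = cl_scale ((-1) ^ j) T"
    using hat X_scalar j unit_carrier[OF T] by (simp add: mul_scale mul_one)
  then have "T \<in> cl_parity n j" by (rule hat_eq_sign_imp_parity[OF unit_carrier[OF T] j(1)])
  then show ?thesis
    by (rule cl_PI[OF one_center one_unit _ j(1) T]) (simp add: one_mul unit_carrier[OF T])
qed

text \<open>With the sign s = +-1 chosen so that 1 + s X_0 is nonzero, 1 + s X is a central unit and
  T (1 + s X) = T + s hat T has a parity.\<close>
lemma cl_P_if_hat_eq_mul_odd:
  assumes n: "odd n" and T: "T \<in> cl_units n eta" and X: "X \<in> cl_scalar_pseudo n"
    and hat: "cl_hat T = T \<odot> X" and X_hat: "X \<odot> cl_hat X = cl_one"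
  shows "T \<in> cl_P n eta"
proof -
  let ?a = "X {}" and ?b = "X {..<n}" and ?s = "bsign eta {..<n} {..<n}"
  have ne: "{..<n} \<noteq> {}" using odd_pos[OF n] by auto
  have norm: "?a * ?a - ?b * ?b * ?s = 1"
    using fun_cong[OF mul_hat_scalar_pseudo_odd(1)[OF n X, unfolded X_hat], of "{}"]
    by (simp add: cl_scale_def cl_one_def)
  define j :: nat where "j = (if ?a = -1 then 1 else 0)"
  define V where "V = cl_add cl_one (cl_scale ((-1) ^ j) X)"
  have j: "j < 2" "1 + (-1) ^ j * ?a \<noteq> 0"
    unfolding j_def by (auto simp: add_eq_0_iff)
  have V: "V \<in> cl_scalar_pseudo n"
    unfolding V_def by (intro scalar_pseudo_add scalar_pseudo_one scalar_pseudo_scale X)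
  have norm_V: "V {} * V {} - V {..<n} * V {..<n} * ?s = 2 * (1 + (-1) ^ j * ?a)"
    using ne norm unfolding V_def cl_add_def cl_scale_def cl_one_def
    by (simp add: algebra_simps)
  have "2 * (1 + (-1) ^ j * ?a) \<noteq> 0" using j(2) by (metis mult_eq_0_iff zero_neq_numeral)
  note V_inv = scalar_pseudo_invertible_odd[OF n V norm_V this]
  let ?W = "cl_scale (1 / (2 * (1 + (-1) ^ j * ?a))) (cl_hat V)"
  have TV: "T \<odot> V = cl_add T (cl_scale ((-1) ^ j) (cl_hat T))"
    unfolding V_def hat using unit_carrier[OF T] by (simp add: mul_add mul_scale mul_one)
  have "?W \<odot> (T \<odot> V) = T \<odot> ?W \<odot> V"
    using V_inv unit_carrier[OF T] by (simp add: mul_assoc[symmetric] cl_center_def)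
  also have "\<dots> = T" using V_inv unit_carrier[OF T] by (simp add: mul_assoc mul_one)
  finally have T_eq: "T = ?W \<odot> (T \<odot> V)" ..
  have "T \<odot> V \<in> cl_parity n j"
    unfolding TV by (rule add_sign_hat_parity[OF unit_carrier[OF T] j(1)])
  then show ?thesis
    by (rule cl_PI[OF V_inv(3,2) _ j(1) mul_unit[OF T V_inv(1)] T_eq])
qed

lemma Gamma_subset_P:
  assumes k: "1 \<le> k" "k < n"
  shows "cl_Gamma n eta k \<subseteq> cl_P n eta"
proof
  fix T assume T_Gamma: "T \<in> cl_Gamma n eta k"
  note T = Gamma_unit[OF T_Gamma] and T_inv = unit_inverse[OF Gamma_unit[OF T_Gamma]]
  define X where "X = cl_inv n eta T \<odot> cl_hat T"
  have X: "X \<in> cl_scalar_pseudo n"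
    unfolding X_def using Gamma_inv_mul_hat_centralizes[OF T_Gamma]
    by (intro centralizes_imp_scalar_pseudo[OF k]) simp_all
  have hat: "cl_hat T = T \<odot> X"
    unfolding X_def using T_inv unit_carrier[OF T] by (simp add: mul_assoc[symmetric] one_mul)
  have "T \<odot> (X \<odot> cl_hat X) = T"
    by (metis cl_hat_hat hat hat_mul mul_assoc)
  then have X_hat: "X \<odot> cl_hat X = cl_one" by (intro unit_cancel_left[OF T]) simp_all
  show "T \<in> cl_P n eta"
  proof (cases "even n")
    case True then show ?thesis using cl_P_if_hat_eq_mul_even T X hat X_hat k by simp
  next
    case False then show ?thesis using cl_P_if_hat_eq_mul_odd T X hat X_hat by simp
  qed
qed

lemma Gamma_rev_mul:
  assumes k: "1 \<le> k" "k < n" and T: "T \<in> cl_Gamma n eta k"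
  shows "cl_rev T \<odot> T \<in> cl_scalar_pseudo n" "cl_rev T \<odot> T \<in> cl_units n eta"
  using centralizes_imp_scalar_pseudo[OF k _ Gamma_rev_mul_centralizes[OF T]]
    mul_unit[OF rev_unit Gamma_unit[OF T]] Gamma_unit[OF T]
  by simp_all

lemma Gamma_subset_Q':
  assumes "1 \<le> k" "k < n"
  shows "cl_Gamma n eta k \<subseteq> cl_Q' n eta"
  using Gamma_subset_P Gamma_rev_mul assms
  unfolding cl_Q'_def cl_invertibles_def by blast

text \<open>The pseudoscalar coefficient of rev T T vanishes for odd k because e_N anticommutes with
  odd blades when n is even, and for n = 2 (mod 4) because rev T T equals its own reversion while
  the reversion negates e_N.\<close>
lemma Gamma_subset_Q:
  assumes k: "1 \<le> k" "k < n" and cases: "odd n \<or> odd k \<or> n mod 4 = 2"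
  shows "cl_Gamma n eta k \<subseteq> cl_Q n eta"
proof
  fix T assume T: "T \<in> cl_Gamma n eta k"
  define Y where "Y = cl_rev T \<odot> T"
  note Y = Gamma_rev_mul[OF k T, folded Y_def]
  have "Y \<in> cl_center n eta"
  proof (cases "odd n")
    case True then show ?thesis by (rule scalar_pseudo_center_odd[OF _ Y(1)])
  next
    case even: False
    have "Y {..<n} = 0"
    proof (cases "odd k")
      case True
      then have "odd (k * (n - 1))" using even k by simp
      then show ?thesis
        unfolding Y_def
        by (rule centralizes_pseudo_coeff_zero[OF less_imp_le[OF k(2)] _ Gamma_rev_mul_centralizes[OF T]])
    next
      case False
      then have "odd (n choose 2)" using cases even choose_two_odd by blast
      moreover have "cl_rev Y = Y" unfolding Y_def by (simp add: rev_mul)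
      then have "Y {..<n} = (-1) ^ (n choose 2) * Y {..<n}" by (metis cl_rev_apply card_lessThan)
      ultimately show ?thesis by simp
    qed
    then show ?thesis using scalar_pseudo_eq_scale_one[OF Y(1)] by (metis scale_center one_center)
  qed
  then show "T \<in> cl_Q n eta"
    using Gamma_subset_P[OF k] T Y(2) unfolding cl_Q_def cl_invertibles_def Y_def by blast
qed

lemma Gamma_classification:
  assumes "2 \<le> n"
  shows "(n mod 4 \<in> {1, 2, 3} \<longrightarrow> (\<forall>k. 1 \<le> k \<and> k \<le> n - 1 \<longrightarrow> cl_Gamma n eta k \<subseteq> cl_Q n eta)) \<and>
     (n mod 4 = 0 \<longrightarrow>
        (\<forall>k. odd k \<and> 1 \<le> k \<and> k \<le> n - 1 \<longrightarrow> cl_Gamma n eta k \<subseteq> cl_Q n eta) \<and>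
        (\<forall>k. even k \<and> 2 \<le> k \<and> k \<le> n - 2 \<longrightarrow> cl_Gamma n eta k \<subseteq> cl_Q' n eta)) \<and>
     (\<forall>k. 1 \<le> k \<and> k \<le> n - 1 \<longrightarrow> cl_Gamma n eta k \<subseteq> cl_P n eta)"
proof (intro conjI impI allI)
  fix k assume "n mod 4 \<in> {1, 2, 3}" "1 \<le> k \<and> k \<le> n - 1"
  moreover from this(1) have "odd n \<or> n mod 4 = 2" by (simp only: insert_iff empty_iff) presburger
  ultimately show "cl_Gamma n eta k \<subseteq> cl_Q n eta" using assms by (intro Gamma_subset_Q) auto
next
  fix k assume "odd k \<and> 1 \<le> k \<and> k \<le> n - 1"
  then show "cl_Gamma n eta k \<subseteq> cl_Q n eta" using assms by (intro Gamma_subset_Q) auto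
next
  fix k assume "even k \<and> 2 \<le> k \<and> k \<le> n - 2"
  then show "cl_Gamma n eta k \<subseteq> cl_Q' n eta" using assms by (intro Gamma_subset_Q') auto
next
  fix k assume "1 \<le> k \<and> k \<le> n - 1"
  then show "cl_Gamma n eta k \<subseteq> cl_P n eta" using assms by (intro Gamma_subset_P) auto
qed

end

theorem mainTheorem12:
  fixes n p q :: nat
  assumes "n \<ge> 2" and "p + q = n"
  shows
   "((n mod 4 \<in> {1, 2, 3} \<longrightarrow> (\<forall>k. 1 \<le> k \<and> k \<le> n - 1 \<longrightarrow> cl_Gamma n (eta_pq p) k \<subseteq> cl_Q n (eta_pq p))) \<and>
     (n mod 4 = 0 \<longrightarrow>
        (\<forall>k. odd k \<and> 1 \<le> k \<and> k \<le> n - 1 \<longrightarrow> cl_Gamma n (eta_pq p) k \<subseteq> cl_Q n (eta_pq p)) \<and>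
        (\<forall>k. even k \<and> 2 \<le> k \<and> k \<le> n - 2 \<longrightarrow> cl_Gamma n (eta_pq p) k \<subseteq> cl_Q' n (eta_pq p))) \<and>
     (\<forall>k. 1 \<le> k \<and> k \<le> n - 1 \<longrightarrow> cl_Gamma n (eta_pq p) k \<subseteq> cl_P n (eta_pq p)))
    \<and>
    ((n mod 4 \<in> {1, 2, 3} \<longrightarrow> (\<forall>k. 1 \<le> k \<and> k \<le> n - 1 \<longrightarrow>
        cl_Gamma n (\<lambda>_. 1::complex) k \<subseteq> cl_Q n (\<lambda>_. 1::complex))) \<and>
     (n mod 4 = 0 \<longrightarrow>
        (\<forall>k. odd k \<and> 1 \<le> k \<and> k \<le> n - 1 \<longrightarrow>
           cl_Gamma n (\<lambda>_. 1::complex) k \<subseteq> cl_Q n (\<lambda>_. 1::complex)) \<and>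
        (\<forall>k. even k \<and> 2 \<le> k \<and> k \<le> n - 2 \<longrightarrow>
           cl_Gamma n (\<lambda>_. 1::complex) k \<subseteq> cl_Q' n (\<lambda>_. 1::complex))) \<and>
     (\<forall>k. 1 \<le> k \<and> k \<le> n - 1 \<longrightarrow> cl_Gamma n (\<lambda>_. 1::complex) k \<subseteq> cl_P n (\<lambda>_. 1::complex)))"
proof -
  interpret real_clifford: nondegenerate_clifford n "eta_pq p"
    by unfold_locales (simp add: eta_pq_def)
  interpret complex_clifford: nondegenerate_clifford n "\<lambda>_. 1::complex"
    by unfold_locales simp
  show ?thesis
    by (rule conjI[OF real_clifford.Gamma_classification[OF assms(1)]
          complex_clifford.Gamma_classification[OF assms(1)]])
qed

end
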